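(* Let $n\ge 2$ and $D$ be positive integers, let $\Gamma$ be a finite alphabet, and let $B\in\Gamma^*$ have length $2\le|B|\le n$. Let $H:\Gamma^2\to\{0,1\}$ be chosen at random as a $(D,5\log_2 n)$-iterated pair-wise independent function, and let $(B_0,B_1,\dots,B_s)=\mathrm{Split}_H(B)$. Then with probability at least $1-1/n^3$, for all $j\in\{0,\dots,s\}$, $|\mathrm{Dict}(B_j)|\le 5D\log_2 n$.
   Context: For a string $z=z_1\cdots z_m$, $z[i,j]=z_i\cdots z_j$, $z[i,j)=z[i,j-1]$, and $\mathrm{Dict}(z)=\{z[i,i+1]: 1\le i\le m-1\}$ is the set of pairs of consecutive symbols occurring in $z$. $\mathrm{Split}_H(B)$: let $i_1<\dots<i_s$ be all $i\in\{2,\dots,|B|-1\}$ with $H(B[i,i+1])=0$ ($s=0$ if none), let $i_0=1$, $i_{s+1}=|B|+1$, and output $B_j=B[i_j,i_{j+1})$ for $j=0,\dots,s$. A $(D,\ell)$-iterated pair-wise independent function $H:\Gamma^2\to\{0,1\}$ is obtained by choosing independently $h_1,\dots,h_\ell:\Gamma^2\to\{0,\dots,\ell D-1\}$, each uniformly from a pair-wise independent hash family (for $u\ne u'$, $\Pr[h(u)=v\wedge h(u')=v']=1/|V|^2$), and setting $H(ab)=0$ iff $\prod_i h_i(ab)=0$. The quantity $5\log_2 n$ is treated as an integer. *)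

theory Defs
  imports "HOL-Probability.Probability"
begin

text \<open>Strings are lists; positions are 1-based as in the paper:
  the i-th symbol of z is z ! (i - 1).\<close>

definition substr :: "'a list \<Rightarrow> nat \<Rightarrow> nat \<Rightarrow> 'a list" where
  "substr z i j = take (j - i) (drop (i - 1) z)"

definition Dict :: "'a list \<Rightarrow> ('a \<times> 'a) set" where
  "Dict z = {(z ! (i - 1), z ! i) | i. 1 \<le> i \<and> i \<le> length z - 1}"

definition split_positions :: "('a \<times> 'a \<Rightarrow> nat) \<Rightarrow> 'a list \<Rightarrow> nat list" where
  "split_positions H B =
     sorted_list_of_set {i. 2 \<le> i \<and> i \<le> length B - 1 \<and> H (B ! (i - 1), B ! i) = 0}"

definition Split :: "('a \<times> 'a \<Rightarrow> nat) \<Rightarrow> 'a list \<Rightarrow> 'a list list" where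
  "Split H B =
     (let ps = 1 # split_positions H B @ [length B + 1]
      in map (\<lambda>j. substr B (ps ! j) (ps ! (j + 1))) [0..<length ps - 1])"

definition pairwise_indep_family :: "('u \<Rightarrow> 'v) set \<Rightarrow> 'v set \<Rightarrow> bool" where
  "pairwise_indep_family F V \<longleftrightarrow>
     finite F \<and> F \<noteq> {} \<and> finite V \<and> (\<forall>h\<in>F. \<forall>u. h u \<in> V) \<and>
     (\<forall>u u' v v'. u \<noteq> u' \<longrightarrow> v \<in> V \<longrightarrow> v' \<in> V \<longrightarrow>
        measure_pmf.prob (pmf_of_set F) {h. h u = v \<and> h u' = v'} = 1 / (real (card V))^2)"

definition iter_hash_pmf :: "nat \<Rightarrow> ('u \<Rightarrow> 'v) set \<Rightarrow> (nat \<Rightarrow> ('u \<Rightarrow> 'v)) pmf" where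
  "iter_hash_pmf l F = Pi_pmf {..<l} undefined (\<lambda>_. pmf_of_set F)"

definition iterH :: "nat \<Rightarrow> (nat \<Rightarrow> ('u \<Rightarrow> nat)) \<Rightarrow> 'u \<Rightarrow> nat" where
  "iterH l hs = (\<lambda>x. if (\<Prod>i<l. hs i x) = 0 then 0 else 1)"

definition five_log :: "nat \<Rightarrow> nat" where
  "five_log n = nat \<lfloor>5 * log 2 (real n)\<rfloor>"

end

theory Submission
  imports Defs
begin

text \<open>
  Let L = five_log n and V = L D. If a piece of Split_H(B) has more than V distinct pairs, then the
  pairs of B that follow its first position and lie inside it include at least V distinct ones, and
  none of them is a cut, i.e. H does not vanish on any of them. Hence for some start position a, the
  shortest window of pairs of B starting at a that has at least V distinct pairs (a set fixed in
  advance) avoids the zeros of all L independent hash functions. A second-moment argument shows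
  that a single pairwise independent h with values in {0..<V} avoids 0 on V given inputs with
  probability at most 1/2, so the window survives with probability at most 2^(-L). A union bound
  over the at most n start positions, together with 2^L \<ge> n^5/2, finishes the proof.
\<close>

lemma pairwise_indep_family_card_pair:
  assumes pf: "pairwise_indep_family F {0..<V}" and "u \<noteq> u'" "v < V" "v' < V"
  shows "real (card {h\<in>F. h u = v \<and> h u' = v'}) = real (card F) / (real V)\<^sup>2"
proof -
  have "finite F" "F \<noteq> {}"
    and "measure_pmf.prob (pmf_of_set F) {h. h u = v \<and> h u' = v'} = 1 / (real V)\<^sup>2"
    using pf assms(2-4) by (auto simp: pairwise_indep_family_def)
  then show ?thesis
    by (simp add: measure_pmf_of_set Int_def field_simps)
qed

lemma pairwise_indep_family_card_single:
  assumes pf: "pairwise_indep_family F {0..<V}" and "u \<noteq> u'" "v < V"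
  shows "real (card {h\<in>F. h u = v}) = real (card F) / real V"
proof -
  have "finite F" and "\<And>h. h \<in> F \<Longrightarrow> h u' < V"
    using pf by (auto simp: pairwise_indep_family_def)
  then have "card {h\<in>F. h u = v} = (\<Sum>v'<V. card {h\<in>F. h u = v \<and> h u' = v'})"
    by (subst card_UN_disjoint[symmetric]) (auto intro!: arg_cong[where f = card])
  also have "real \<dots> = (\<Sum>v'<V. real (card F) / (real V)\<^sup>2)"
    using pairwise_indep_family_card_pair[OF pf \<open>u \<noteq> u'\<close> \<open>v < V\<close>] by simp
  finally show ?thesis
    by (simp add: power2_eq_square)
qed

lemma card_eq_0_mult_square_le_sum:
  fixes X :: "'b \<Rightarrow> real"
  assumes "finite F"
  shows "real (card {h\<in>F. X h = 0}) * t\<^sup>2 \<le> (\<Sum>h\<in>F. (X h - t)\<^sup>2)"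
proof -
  have "real (card {h\<in>F. X h = 0}) * t\<^sup>2 = (\<Sum>h\<in>F. of_bool (X h = 0) * (X h - t)\<^sup>2)"
    using assms by (simp add: sum.If_cases Int_def)
  also have "\<dots> \<le> (\<Sum>h\<in>F. (X h - t)\<^sup>2)"
    by (intro sum_mono) auto
  finally show ?thesis .
qed

definition num_zeros :: "'u set \<Rightarrow> ('u \<Rightarrow> nat) \<Rightarrow> real" where
  "num_zeros S h = (\<Sum>u\<in>S. of_bool (h u = 0))"

lemma pairwise_indep_family_num_zeros_moments:
  assumes pf: "pairwise_indep_family F {0..<V}" and "0 < V" "finite S" "2 \<le> card S"
  defines "N \<equiv> real (card F)" and "m \<equiv> real (card S)"
  shows "(\<Sum>h\<in>F. num_zeros S h) = m * N / V"
    and "(\<Sum>h\<in>F. (num_zeros S h)\<^sup>2) = m * N / V + m * (m - 1) * N / (real V)\<^sup>2"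
proof -
  have "finite F"
    using pf by (simp add: pairwise_indep_family_def)
  have card_0: "real (card {h\<in>F. h u = 0}) = N / V" for u
  proof -
    obtain u' where "u' \<noteq> u"
      using assms(3,4) by (metis card_le_Suc0_iff_eq not_less_eq_eq numeral_2_eq_2 order.trans)
    then show ?thesis
      using pairwise_indep_family_card_single[OF pf _ \<open>0 < V\<close>, of u u'] by (simp add: N_def)
  qed
  have card_00: "real (card {h\<in>F. h u = 0 \<and> h u' = 0}) = (if u = u' then N / V else N / (real V)\<^sup>2)"
    for u u'
    using card_0[of u] pairwise_indep_family_card_pair[OF pf, of u u' 0 0] \<open>0 < V\<close>
    by (auto simp: N_def)
  have "(\<Sum>h\<in>F. num_zeros S h) = (\<Sum>u\<in>S. real (card {h\<in>F. h u = 0}))"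
    unfolding num_zeros_def using \<open>finite F\<close> by (subst sum.swap) (simp add: Int_def)
  then show "(\<Sum>h\<in>F. num_zeros S h) = m * N / V"
    by (simp add: card_0 m_def)
  have "(num_zeros S h)\<^sup>2 = (\<Sum>u\<in>S. \<Sum>u'\<in>S. of_bool (h u = 0 \<and> h u' = 0))" for h
    by (simp add: num_zeros_def power2_eq_square sum_product of_bool_conj)
  then have "(\<Sum>h\<in>F. (num_zeros S h)\<^sup>2) = (\<Sum>u\<in>S. \<Sum>u'\<in>S. \<Sum>h\<in>F. of_bool (h u = 0 \<and> h u' = 0))"
    by (simp add: sum.swap[of _ F] sum.swap[of _ F S])
  also have "\<dots> = (\<Sum>u\<in>S. \<Sum>u'\<in>S. real (card {h\<in>F. h u = 0 \<and> h u' = 0}))"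
    using \<open>finite F\<close> by (simp add: Int_def)
  also have "\<dots> = (\<Sum>u\<in>S. N / V + (m - 1) * N / (real V)\<^sup>2)"
  proof (intro sum.cong refl)
    fix u assume "u \<in> S"
    have "m = real (card (S - {u})) + 1"
      using card_Suc_Diff1[OF \<open>finite S\<close> \<open>u \<in> S\<close>] by (simp add: m_def)
    moreover have "(\<Sum>u'\<in>S. real (card {h\<in>F. h u = 0 \<and> h u' = 0}))
        = N / V + (\<Sum>u'\<in>S - {u}. N / (real V)\<^sup>2)"
      using \<open>u \<in> S\<close> \<open>finite S\<close>
      by (simp add: card_00 sum.remove eq_commute[of u] cong: sum.cong_simp)
    ultimately show "(\<Sum>u'\<in>S. real (card {h\<in>F. h u = 0 \<and> h u' = 0}))
        = N / V + (m - 1) * N / (real V)\<^sup>2"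
      by simp
  qed
  finally show "(\<Sum>h\<in>F. (num_zeros S h)\<^sup>2) = m * N / V + m * (m - 1) * N / (real V)\<^sup>2"
    by (simp add: m_def algebra_simps)
qed

lemma pairwise_indep_family_prob_no_zero:
  assumes pf: "pairwise_indep_family F {0..<V}" and "finite S" "V \<le> card S" "2 \<le> V"
  shows "measure_pmf.prob (pmf_of_set F) {h. \<forall>u\<in>S. h u \<noteq> 0} \<le> 1 / 2"
proof -
  have "finite F" "F \<noteq> {}"
    using pf by (auto simp: pairwise_indep_family_def)
  define N where "N = real (card F)"
  define m where "m = real (card S)"
  \<comment> \<open>Chebyshev for the number of zeros on S, centred at twice its mean m / V\<close>
  define t where "t = 2 * m / V"
  have "N > 0" "real V \<le> m" "real V \<ge> 2"
    using \<open>finite F\<close> \<open>F \<noteq> {}\<close> assms(3,4) by (auto simp: N_def m_def card_gt_0_iff)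
  note moments = pairwise_indep_family_num_zeros_moments[OF pf _ \<open>finite S\<close>, folded N_def m_def]
  have "real (card {h\<in>F. num_zeros S h = 0}) * t\<^sup>2 \<le> (\<Sum>h\<in>F. (num_zeros S h - t)\<^sup>2)"
    using \<open>finite F\<close> by (rule card_eq_0_mult_square_le_sum)
  also have "\<dots> = (\<Sum>h\<in>F. (num_zeros S h)\<^sup>2) - 2 * t * (\<Sum>h\<in>F. num_zeros S h) + N * t\<^sup>2"
    by (simp add: power2_diff sum.distrib sum_subtractf sum_distrib_left sum_distrib_right N_def mult_ac)
  also have "\<dots> = N * m * (V + m - 1) / (real V)\<^sup>2"
    using moments assms(3,4) \<open>real V \<ge> 2\<close> by (simp add: t_def field_simps power2_eq_square)
  also have "\<dots> \<le> N * m * (2 * m) / (real V)\<^sup>2"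
    using \<open>N > 0\<close> \<open>real V \<le> m\<close> \<open>real V \<ge> 2\<close>
    by (intro divide_right_mono mult_left_mono) auto
  also have "\<dots> = N / 2 * t\<^sup>2"
    by (simp add: t_def power2_eq_square)
  finally have "real (card {h\<in>F. num_zeros S h = 0}) \<le> N / 2"
    using \<open>real V \<le> m\<close> \<open>real V \<ge> 2\<close> by (simp add: t_def)
  moreover have "{h\<in>F. num_zeros S h = 0} = F \<inter> {h. \<forall>u\<in>S. h u \<noteq> 0}"
    using \<open>finite S\<close> by (auto simp: num_zeros_def)
  ultimately show ?thesis
    using \<open>N > 0\<close> by (simp add: measure_pmf_of_set[OF \<open>F \<noteq> {}\<close> \<open>finite F\<close>] N_def field_simps)
qed

lemma iterH_neq_0_iff: "iterH L hs u \<noteq> 0 \<longleftrightarrow> (\<forall>i<L. hs i u \<noteq> 0)"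
  by (auto simp: iterH_def prod_zero_iff)

lemma prob_iterH_no_zero:
  assumes "pairwise_indep_family F {0..<V}" "finite S" "V \<le> card S" "2 \<le> V"
  shows "measure_pmf.prob (iter_hash_pmf L F) {hs. \<forall>u\<in>S. iterH L hs u \<noteq> 0} \<le> (1 / 2) ^ L"
proof -
  define G where "G = {h. \<forall>u\<in>S. h u \<noteq> (0::nat)}"
  have "{hs. \<forall>u\<in>S. iterH L hs u \<noteq> 0} = Pi {..<L} (\<lambda>_. G)"
    unfolding G_def Pi_def mem_Collect_eq iterH_neq_0_iff by blast
  then have "measure_pmf.prob (iter_hash_pmf L F) {hs. \<forall>u\<in>S. iterH L hs u \<noteq> 0}
      = measure_pmf.prob (pmf_of_set F) G ^ L"
    by (simp add: iter_hash_pmf_def measure_Pi_pmf_Pi)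
  also have "\<dots> \<le> (1 / 2) ^ L"
    using pairwise_indep_family_prob_no_zero[OF assms] by (simp add: G_def power_mono)
  finally show ?thesis .
qed

lemma prob_iterH_no_zero_on_large_chain:
  fixes W :: "nat \<Rightarrow> 'u set"
  assumes "pairwise_indep_family F {0..<V}" "2 \<le> V" "mono W" "\<And>c. finite (W c)"
  shows "measure_pmf.prob (iter_hash_pmf L F)
           {hs. \<exists>c. V \<le> card (W c) \<and> (\<forall>u\<in>W c. iterH L hs u \<noteq> 0)} \<le> (1 / 2) ^ L"
proof (cases "\<exists>c. V \<le> card (W c)")
  case True
  define c\<^sub>0 where "c\<^sub>0 = (LEAST c. V \<le> card (W c))"
  have "V \<le> card (W c\<^sub>0)"
    unfolding c\<^sub>0_def using True by (rule LeastI_ex)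
  have "W c\<^sub>0 \<subseteq> W c" if "V \<le> card (W c)" for c
    using \<open>mono W\<close> Least_le[of "\<lambda>c. V \<le> card (W c)", OF that] by (auto simp: c\<^sub>0_def mono_def)
  then have "{hs. \<exists>c. V \<le> card (W c) \<and> (\<forall>u\<in>W c. iterH L hs u \<noteq> 0)}
      \<subseteq> {hs. \<forall>u\<in>W c\<^sub>0. iterH L hs u \<noteq> 0}"
    by blast
  then have "measure_pmf.prob (iter_hash_pmf L F)
        {hs. \<exists>c. V \<le> card (W c) \<and> (\<forall>u\<in>W c. iterH L hs u \<noteq> 0)}
      \<le> measure_pmf.prob (iter_hash_pmf L F) {hs. \<forall>u\<in>W c\<^sub>0. iterH L hs u \<noteq> 0}"
    by (rule measure_pmf.finite_measure_mono) simp
  also have "\<dots> \<le> (1 / 2) ^ L"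
    using assms(1,4) \<open>V \<le> card (W c\<^sub>0)\<close> assms(2) by (rule prob_iterH_no_zero)
  finally show ?thesis .
qed simp

text \<open>Positions are 0-based here: adj_pair z t is the pair z[t+1,t+2] of the paper.\<close>

definition adj_pair :: "'a list \<Rightarrow> nat \<Rightarrow> 'a \<times> 'a" where
  "adj_pair z t = (z ! t, z ! Suc t)"

lemma Dict_eq_image_adj_pair: "Dict z = adj_pair z ` {..<length z - 1}"
proof -
  have "Dict z = (\<lambda>i. adj_pair z (i - 1)) ` {1..length z - 1}"
    by (auto simp: Dict_def adj_pair_def)
  also have "\<dots> = (\<lambda>i. adj_pair z (i - 1)) ` Suc ` {..<length z - 1}"
    by (simp only: image_Suc_lessThan)
  finally show ?thesis
    by (simp add: image_image)
qed

lemma Dict_substr: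
  assumes "1 \<le> i" "j \<le> length z + 1"
  shows "Dict (substr z i j) = adj_pair z ` {i - 1..<j - 2}"
proof -
  have "length (substr z i j) = j - i"
    using assms by (simp add: substr_def)
  moreover have "adj_pair (substr z i j) t = adj_pair z (i - 1 + t)" if "t < j - i - 1" for t
    using that assms by (simp add: substr_def adj_pair_def)
  ultimately have "Dict (substr z i j) = (\<lambda>t. adj_pair z (i - 1 + t)) ` {..<j - i - 1}"
    by (simp add: Dict_eq_image_adj_pair)
  moreover have "{i - 1..<j - 2} = plus (i - 1) ` {..<j - i - 1}"
    unfolding lessThan_atLeast0 image_add_atLeastLessThan using assms by (cases "i < j") auto
  ultimately show ?thesis
    by (simp only: image_image)
qed

lemma in_set_SplitE:
  assumes "2 \<le> length B" "Bj \<in> set (Split H B)"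
  obtains a b where "1 \<le> a" "a < b" "b \<le> length B + 1" "Bj = substr B a b"
    "\<And>i. \<lbrakk>a < i; i < b; 2 \<le> i; i \<le> length B - 1\<rbrakk> \<Longrightarrow> H (B ! (i - 1), B ! i) \<noteq> 0"
proof -
  define C where "C = {i. 2 \<le> i \<and> i \<le> length B - 1 \<and> H (B ! (i - 1), B ! i) = 0}"
  define ps where "ps = 1 # sorted_list_of_set C @ [length B + 1]"
  have "finite C"
    by (rule finite_subset[of _ "{..length B}"]) (auto simp: C_def)
  then have "sorted_wrt (<) ps" and set_ps: "set ps = insert 1 (insert (length B + 1) C)"
    using assms(1) by (auto simp: ps_def sorted_wrt_append C_def)
  then have "sorted ps"
    by (simp add: strict_sorted_imp_sorted)
  have ps_range: "1 \<le> x \<and> x \<le> length B + 1" if "x \<in> set ps" for x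
    using that set_ps by (auto simp: C_def)
  from assms(2) obtain j where j: "j < length ps - 1" and Bj: "Bj = substr B (ps ! j) (ps ! (j + 1))"
    unfolding Split_def split_positions_def Let_def C_def[symmetric] ps_def[symmetric] by auto
  show thesis
  proof
    show "ps ! j < ps ! (j + 1)"
      using sorted_wrt_nth_less[OF \<open>sorted_wrt (<) ps\<close>, of j "j + 1"] j by simp
    show "1 \<le> ps ! j" "ps ! (j + 1) \<le> length B + 1"
      using ps_range[OF nth_mem, of j] ps_range[OF nth_mem, of "j + 1"] j by auto
    show "Bj = substr B (ps ! j) (ps ! (j + 1))"
      by (fact Bj)
  next
    fix i assume i: "ps ! j < i" "i < ps ! (j + 1)" "2 \<le> i" "i \<le> length B - 1"
    show "H (B ! (i - 1), B ! i) \<noteq> 0"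
    proof
      assume "H (B ! (i - 1), B ! i) = 0"
      with i have "i \<in> set ps"
        by (simp add: set_ps C_def)
      then obtain k where "k < length ps" "ps ! k = i"
        by (auto simp: in_set_conv_nth)
      moreover have "j + 1 < length ps"
        using j by simp
      ultimately have "\<not> k \<le> j" "\<not> j + 1 \<le> k"
        using i sorted_nth_mono[OF \<open>sorted ps\<close>, of k j] sorted_nth_mono[OF \<open>sorted ps\<close>, of "j + 1" k]
        by auto
      then show False
        by simp
    qed
  qed
qed

lemma Split_large_Dict_obtains_window:
  assumes "2 \<le> length B" "Bj \<in> set (Split H B)" "V < card (Dict Bj)"
  obtains a c where "1 \<le> a" "a \<le> length B" "V \<le> card (adj_pair B ` {a..c})"
    "\<forall>u\<in>adj_pair B ` {a..c}. H u \<noteq> 0"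
proof -
  obtain a b where ab: "1 \<le> a" "a < b" "b \<le> length B + 1" "Bj = substr B a b"
    and no_cut: "\<And>i. \<lbrakk>a < i; i < b; 2 \<le> i; i \<le> length B - 1\<rbrakk> \<Longrightarrow> H (B ! (i - 1), B ! i) \<noteq> 0"
    using in_set_SplitE[OF assms(1,2)] by blast
  have "Dict Bj = adj_pair B ` {a - 1..<b - 2}"
    using ab by (simp add: Dict_substr)
  \<comment> \<open>the first pair of the piece may be the cut that starts it, so it is kept apart\<close>
  also have "\<dots> \<subseteq> adj_pair B ` insert (a - 1) {a..b - 3}"
    by (rule image_mono) auto
  finally have "card (Dict Bj) \<le> card (insert (adj_pair B (a - 1)) (adj_pair B ` {a..b - 3}))"
    by (intro card_mono) auto
  also have "\<dots> \<le> Suc (card (adj_pair B ` {a..b - 3}))"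
    by (simp add: card_insert_if)
  finally have "V \<le> card (adj_pair B ` {a..b - 3})"
    using assms(3) by simp
  moreover have "H (adj_pair B t) \<noteq> 0" if "t \<in> {a..b - 3}" for t
  proof -
    have "H (B ! (Suc t - 1), B ! Suc t) \<noteq> 0"
      using that ab by (intro no_cut) auto
    then show ?thesis
      by (simp add: adj_pair_def)
  qed
  ultimately show thesis
    using ab by (intro that[of a "b - 3"]) auto
qed

lemma prob_iterH_Split_large_Dict:
  assumes pf: "pairwise_indep_family F {0..<V}" and "2 \<le> V" "2 \<le> length B"
  shows "measure_pmf.prob (iter_hash_pmf L F)
           {hs. \<exists>Bj\<in>set (Split (iterH L hs) B). V < card (Dict Bj)} \<le> real (length B) * (1 / 2) ^ L"
proof -
  define bad where "bad a = {hs. \<exists>c. V \<le> card (adj_pair B ` {a..c}) \<and>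
                                   (\<forall>u\<in>adj_pair B ` {a..c}. iterH L hs u \<noteq> 0)}" for a
  have "{hs. \<exists>Bj\<in>set (Split (iterH L hs) B). V < card (Dict Bj)} \<subseteq> (\<Union>a\<in>{1..length B}. bad a)"
  proof
    fix hs assume "hs \<in> {hs. \<exists>Bj\<in>set (Split (iterH L hs) B). V < card (Dict Bj)}"
    then obtain Bj where "Bj \<in> set (Split (iterH L hs) B)" "V < card (Dict Bj)"
      by blast
    with assms(3) obtain a c where "1 \<le> a" "a \<le> length B"
      "V \<le> card (adj_pair B ` {a..c})" "\<forall>u\<in>adj_pair B ` {a..c}. iterH L hs u \<noteq> 0"
      by (rule Split_large_Dict_obtains_window)
    then show "hs \<in> (\<Union>a\<in>{1..length B}. bad a)"
      by (auto simp: bad_def)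
  qed
  then have "measure_pmf.prob (iter_hash_pmf L F)
        {hs. \<exists>Bj\<in>set (Split (iterH L hs) B). V < card (Dict Bj)}
      \<le> measure_pmf.prob (iter_hash_pmf L F) (\<Union>a\<in>{1..length B}. bad a)"
    by (rule measure_pmf.finite_measure_mono) simp
  also have "\<dots> \<le> (\<Sum>a\<in>{1..length B}. measure_pmf.prob (iter_hash_pmf L F) (bad a))"
    by (rule measure_pmf.finite_measure_subadditive_finite) auto
  also have "\<dots> \<le> (\<Sum>a\<in>{1..length B}. (1 / 2) ^ L)"
  proof (rule sum_mono)
    fix a
    have "mono (\<lambda>c. adj_pair B ` {a..c})"
      by (intro monoI image_mono) auto
    then show "measure_pmf.prob (iter_hash_pmf L F) (bad a) \<le> (1 / 2) ^ L"
      unfolding bad_def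
      by (rule prob_iterH_no_zero_on_large_chain[where W = "\<lambda>c. adj_pair B ` {a..c}", OF pf \<open>2 \<le> V\<close>])
        simp
  qed
  finally show ?thesis
    by simp
qed

lemma five_log_bounds:
  assumes "2 \<le> n"
  shows "5 \<le> five_log n" "real (five_log n) \<le> 5 * log 2 n" "5 * log 2 n - 1 < real (five_log n)"
proof -
  have "5 \<le> 5 * log 2 n"
    using assms by simp
  then show "5 \<le> five_log n" "real (five_log n) \<le> 5 * log 2 n" "5 * log 2 n - 1 < real (five_log n)"
    unfolding five_log_def by linarith+
qed

lemma real_mult_half_pow_five_log_le:
  assumes "2 \<le> n"
  shows "real n * (1 / 2) ^ five_log n \<le> 1 / real n ^ 3"
proof -
  have "real n ^ 5 / 2 = 2 powr (5 * log 2 n - 1)"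
    using assms by (simp add: powr_diff powr_powr[symmetric] mult.commute[of 5] powr_realpow)
  also have "\<dots> \<le> 2 ^ five_log n"
    using five_log_bounds(3)[OF assms] by (simp add: powr_realpow[symmetric])
  finally have "real n ^ 5 / 2 \<le> 2 ^ five_log n" .
  then have "real n * (1 / 2) ^ five_log n \<le> 2 / real n ^ 4"
    using assms by (simp add: power_divide field_simps eval_nat_numeral)
  also have "\<dots> \<le> 1 / real n ^ 3"
    using assms by (simp add: field_simps eval_nat_numeral)
  finally show ?thesis .
qed

theorem lemma2:
  fixes n D :: nat and B :: "'a::finite list" and F :: "('a \<times> 'a \<Rightarrow> nat) set"
  assumes "n \<ge> 2" and "D > 0"
    and "2 \<le> length B" and "length B \<le> n"
    and "pairwise_indep_family F {0..<five_log n * D}"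
  shows "measure_pmf.prob (iter_hash_pmf (five_log n) F)
           {hs. \<forall>Bj \<in> set (Split (iterH (five_log n) hs) B).
                  real (card (Dict Bj)) \<le> 5 * real D * log 2 (real n)}
         \<ge> 1 - 1 / real n ^ 3"
proof -
  define L where "L = five_log n"
  define V where "V = L * D"
  let ?good = "{hs. \<forall>Bj \<in> set (Split (iterH L hs) B). real (card (Dict Bj)) \<le> 5 * real D * log 2 n}"
  let ?bad = "{hs. \<exists>Bj \<in> set (Split (iterH L hs) B). V < card (Dict Bj)}"
  have "2 \<le> V"
    using five_log_bounds(1)[OF assms(1)] mult_le_mono[of 5 L 1 D] assms(2)
    unfolding V_def L_def by linarith
  have "real L * real D \<le> 5 * log 2 n * real D"
    using five_log_bounds(2)[OF assms(1)] unfolding L_def by (rule mult_right_mono) simp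
  then have "real V \<le> 5 * real D * log 2 n"
    by (simp add: V_def mult_ac)
  then have "UNIV - ?good \<subseteq> ?bad"
    by (auto simp: not_le) (meson linorder_not_le of_nat_less_iff order_trans)
  then have "1 - measure_pmf.prob (iter_hash_pmf L F) ?good \<le> measure_pmf.prob (iter_hash_pmf L F) ?bad"
    by (subst measure_pmf.prob_compl[symmetric]) (auto intro: measure_pmf.finite_measure_mono)
  also have "\<dots> \<le> real (length B) * (1 / 2) ^ L"
    using assms(5)[folded L_def, folded V_def] \<open>2 \<le> V\<close> assms(3) by (rule prob_iterH_Split_large_Dict)
  also have "\<dots> \<le> real n * (1 / 2) ^ L"
    using assms(4) by (simp add: mult_right_mono)
  also have "\<dots> \<le> 1 / real n ^ 3"
    using real_mult_half_pow_five_log_le[OF assms(1)] by (simp add: L_def)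
  finally show ?thesis
    unfolding L_def by simp
qed

end
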